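(* Let $q \geq 2$ be an integer and let $n=(q^2+1)(q+1)$. Let $H_0$ be a graph on $n$ vertices in which each vertex may carry at most one loop, with symmetric $0/1$ adjacency matrix $M$ (where $M_{vv}=1$ exactly when $v$ carries a loop), such that every row of $M$ sums to $q+1$, and such that all eigenvalues of $M$ other than the largest one ($=q+1$) have absolute value at most $\sqrt{2q}$. Let $H$ be the simple graph obtained from $H_0$ by deleting all loops, and assume $H$ contains no cycle of length $3$ or $4$. Let $G_1$ be the simple graph on $V(H)$ in which two distinct vertices $x,y$ are adjacent if and only if there is a vertex $w \notin\{x,y\}$ adjacent in $H$ to both $x$ and $y$ (equivalently, $G_1$ is the union over $v \in V(H)$ of the complete graphs on $N_H(v)$). Then for every $X \subseteq V(G_1)$, \[\left|e_{G_1}(X) - \frac{q}{q^2+1}\binom{|X|}{2}\right| \leq (2q+1)|X|,\] i.e. $G_1$ is $\bigl(q/(q^2+1),\,2q+1\bigr)$-jumbled.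
   Context: For a graph $G$ and $X \subseteq V(G)$, $e_G(X)$ denotes the number of edges of $G$ with both endpoints in $X$. A graph $G$ is $(p,\beta)$-jumbled if $\left|e_G(X) - p\binom{|X|}{2}\right| \leq \beta |X|$ for all $X \subseteq V(G)$. $N_H(v)$ denotes the set of neighbours of $v$ in $H$. *)

theory Defs
  imports "Jordan_Normal_Form.Char_Poly" 
begin

text \<open>Graphs on vertex set {0..<n}, given by a symmetric adjacency predicate.\<close>

definition has_triangle :: "nat \<Rightarrow> (nat \<Rightarrow> nat \<Rightarrow> bool) \<Rightarrow> bool" where
  "has_triangle n E \<longleftrightarrow> (\<exists>a<n. \<exists>b<n. \<exists>c<n. distinct [a,b,c] \<and> E a b \<and> E b c \<and> E c a)"

definition has_C4 :: "nat \<Rightarrow> (nat \<Rightarrow> nat \<Rightarrow> bool) \<Rightarrow> bool" where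
  "has_C4 n E \<longleftrightarrow> (\<exists>a<n. \<exists>b<n. \<exists>c<n. \<exists>d<n. distinct [a,b,c,d] \<and> E a b \<and> E b c \<and> E c d \<and> E d a)"

definition edges_in :: "(nat \<Rightarrow> nat \<Rightarrow> bool) \<Rightarrow> nat set \<Rightarrow> nat" where
  "edges_in E X = card {{x, y} | x y. x \<in> X \<and> y \<in> X \<and> x \<noteq> y \<and> E x y}"

definition loopless_graph :: "real mat \<Rightarrow> nat \<Rightarrow> nat \<Rightarrow> bool" where
  "loopless_graph M x y \<longleftrightarrow> x \<noteq> y \<and> x < dim_row M \<and> y < dim_row M \<and> M $$ (x, y) = 1"

definition common_nbr_graph :: "nat \<Rightarrow> (nat \<Rightarrow> nat \<Rightarrow> bool) \<Rightarrow> nat \<Rightarrow> nat \<Rightarrow> bool" where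
  "common_nbr_graph n H x y \<longleftrightarrow> x \<noteq> y \<and> x < n \<and> y < n \<and>
     (\<exists>w<n. w \<noteq> x \<and> w \<noteq> y \<and> H w x \<and> H w y)"

end

theory Submission
  imports Defs "HOL-Analysis.Function_Topology"
begin

(* Since H has no 4-cycles, two vertices have at most one common neighbour, so e_G1(X) is
   exactly the sum over w of C(d_X(w), 2) with d_X(w) = |N_H(w) \<inter> X|. Up to the loops,
   d_X(w) is the w-th entry of M 1_X. Writing 1_X as its mean plus a sum-zero vector y, the
   spectral condition gives |M 1_X|^2 = (q+1)^2 |X|^2 / n + |M y|^2 with |M y|^2 <= 2q |X|,
   and the estimate follows by arithmetic.
   The spectral condition is stated through the characteristic polynomial, so the bound
   |M y|^2 <= 2q |y|^2 on sum-zero vectors is derived from it: a maximizer of |M y|^2 on the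
   sum-zero unit sphere is an eigenvector of M^2, which produces a sum-zero eigenvector of M
   whose eigenvalue has absolute value the square root of the maximum; that eigenvalue is not
   q+1, as q+1 would then be a double root of the characteristic polynomial. *)

definition matvec :: "real mat \<Rightarrow> nat \<Rightarrow> (nat \<Rightarrow> real) \<Rightarrow> nat \<Rightarrow> real" where
  "matvec M n y i = (\<Sum>j<n. M $$ (i, j) * y j)"

definition sqnorm :: "nat \<Rightarrow> (nat \<Rightarrow> real) \<Rightarrow> real" where
  "sqnorm n y = (\<Sum>i<n. (y i)\<^sup>2)"

lemma matvec_linear:
  "matvec M n (\<lambda>j. a * u j + b * v j) i = a * matvec M n u i + b * matvec M n v i"
  unfolding matvec_def by (simp add: algebra_simps sum.distrib sum_distrib_left)

lemma matvec_cong: "(\<And>j. j < n \<Longrightarrow> u j = v j) \<Longrightarrow> matvec M n u i = matvec M n v i"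
  unfolding matvec_def by simp

lemma matvec_const:
  assumes "\<forall>i<n. (\<Sum>j<n. M $$ (i, j)) = r" and "i < n"
  shows "matvec M n (\<lambda>_. c) i = r * c"
  using assms unfolding matvec_def by (simp add: sum_distrib_right[symmetric])

lemma matvec_symmetric:
  assumes sym: "\<forall>i<n. \<forall>j<n. M $$ (i, j) = M $$ (j, i)"
  shows "(\<Sum>i<n. matvec M n u i * v i) = (\<Sum>i<n. u i * matvec M n v i)"
proof -
  have "(\<Sum>i<n. matvec M n u i * v i) = (\<Sum>i<n. \<Sum>j<n. M $$ (i, j) * u j * v i)"
    unfolding matvec_def by (simp add: sum_distrib_right)
  also have "\<dots> = (\<Sum>j<n. \<Sum>i<n. M $$ (i, j) * u j * v i)" by (rule sum.swap)
  also have "\<dots> = (\<Sum>j<n. u j * matvec M n v j)"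
    unfolding matvec_def sum_distrib_left
    by (intro sum.cong refl) (use sym in auto)
  finally show ?thesis .
qed

lemma sum_matvec:
  assumes sym: "\<forall>i<n. \<forall>j<n. M $$ (i, j) = M $$ (j, i)"
    and rows: "\<forall>i<n. (\<Sum>j<n. M $$ (i, j)) = r"
  shows "(\<Sum>i<n. matvec M n u i) = r * (\<Sum>i<n. u i)"
proof -
  have "(\<Sum>i<n. matvec M n u i) = (\<Sum>i<n. matvec M n u i * 1)" by simp
  also have "\<dots> = (\<Sum>i<n. u i * matvec M n (\<lambda>_. 1) i)" by (rule matvec_symmetric[OF sym])
  also have "\<dots> = (\<Sum>i<n. u i * r)" using matvec_const[OF rows] by simp
  finally show ?thesis by (simp add: sum_distrib_left mult.commute)
qed

lemma sqnorm_nonneg: "sqnorm n y \<ge> 0"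
  unfolding sqnorm_def by (simp add: sum_nonneg)

lemma sqnorm_eq_0_iff: "sqnorm n y = 0 \<longleftrightarrow> (\<forall>i<n. y i = 0)"
  unfolding sqnorm_def by (subst sum_nonneg_eq_0_iff) auto

lemma sqnorm_matvec_eq_0: "sqnorm n y = 0 \<Longrightarrow> sqnorm n (matvec M n y) = 0"
  unfolding sqnorm_eq_0_iff by (simp add: matvec_def)

lemma char_poly_root_of_eigenfun:
  assumes M: "M \<in> carrier_mat n n"
    and eigen: "\<forall>i<n. matvec M n v i = lam * v i" and nz: "j < n" "v j \<noteq> 0"
  shows "poly (char_poly M) lam = 0"
proof -
  have "eigenvector M (vec n v) lam"
    unfolding eigenvector_def
  proof (intro conjI)
    show "vec n v \<in> carrier_vec (dim_row M)" using M by auto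
    show "vec n v \<noteq> 0\<^sub>v (dim_row M)" using M nz
      by (metis carrier_matD(1) index_vec index_zero_vec(1))
    show "M *\<^sub>v vec n v = lam \<cdot>\<^sub>v vec n v"
    proof (rule eq_vecI)
      fix i assume "i < dim_vec (lam \<cdot>\<^sub>v vec n v)"
      hence i: "i < n" by simp
      have "(M *\<^sub>v vec n v) $ i = matvec M n v i"
        using M i by (simp add: matvec_def scalar_prod_def atLeast0LessThan)
      thus "(M *\<^sub>v vec n v) $ i = (lam \<cdot>\<^sub>v vec n v) $ i" using eigen i by simp
    qed (use M in auto)
  qed
  thus ?thesis
    using eigenvalue_root_char_poly[OF M] unfolding eigenvalue_def by blast
qed

lemma sum_insert_index:
  assumes "i < Suc m"
  shows "(\<Sum>k<m. f (insert_index i k)) = (\<Sum>j\<in>{..<Suc m} - {i}. f j)"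
proof (rule sum.reindex_bij_betw)
  show "bij_betw (insert_index i) {..<m} ({..<Suc m} - {i})"
    by (rule bij_betw_byWitness[where f' = "delete_index i"])
       (use assms in \<open>auto simp: insert_index_def delete_index_def\<close>)
qed

lemma char_poly_principal_minor_root:
  assumes M: "M \<in> carrier_mat (Suc m) (Suc m)" and i: "i < Suc m"
    and eigen: "\<forall>j<Suc m. matvec M (Suc m) u j = lam * u j"
    and vanish: "u i = 0" and nz: "j < Suc m" "u j \<noteq> 0"
  shows "poly (char_poly (mat_delete M i i)) lam = 0"
proof -
  have ji: "j \<noteq> i" using vanish nz by auto
  define u' where "u' = (\<lambda>k. u (insert_index i k))"
  have minor: "mat_delete M i i \<in> carrier_mat m m"
    using mat_delete_carrier[OF M, of i i] by simp
  show ?thesis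
  proof (rule char_poly_root_of_eigenfun[OF minor, where v = u' and j = "delete_index i j"])
    show "delete_index i j < m" using nz ji i by (auto simp: delete_index_def)
    show "u' (delete_index i j) \<noteq> 0" using nz ji by (simp add: u'_def insert_delete_index)
    show "\<forall>k<m. matvec (mat_delete M i i) m u' k = lam * u' k"
    proof (intro allI impI)
      fix k assume k: "k < m"
      have "matvec (mat_delete M i i) m u' k
          = (\<Sum>l<m. M $$ (insert_index i k, insert_index i l) * u (insert_index i l))"
        unfolding matvec_def u'_def
        by (intro sum.cong refl, subst mat_delete_index[symmetric, where n = m])
           (use M i k in auto)
      also have "\<dots> = (\<Sum>l\<in>{..<Suc m} - {i}. M $$ (insert_index i k, l) * u l)"
        using sum_insert_index[OF i] .
      also have "\<dots> = matvec M (Suc m) u (insert_index i k)"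
        unfolding matvec_def by (rule sum.mono_neutral_left) (use vanish in auto)
      also have "\<dots> = lam * u' k" using eigen k unfolding u'_def
        by (simp add: insert_index_def)
      finally show "matvec (mat_delete M i i) m u' k = lam * u' k" .
    qed
  qed
qed

(* The derivative of the characteristic polynomial is the sum of the characteristic
   polynomials of the principal minors. Subtracting a sum-zero eigenfunction from a constant
   one makes it vanish at any prescribed coordinate, so the row sum is an eigenvalue of every
   principal minor and hence a double root. *)
lemma char_poly_double_root_of_sum_zero_eigenfun:
  assumes M: "M \<in> carrier_mat n n"
    and rows: "\<forall>i<n. (\<Sum>j<n. M $$ (i, j)) = r"
    and cp: "char_poly M = [:-r, 1:] * p"
    and eigen: "\<forall>i<n. matvec M n w i = r * w i" and sum0: "(\<Sum>i<n. w i) = 0"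
    and nz: "j < n" "w j \<noteq> 0"
  shows "poly p r = 0"
proof -
  obtain m where n: "n = Suc m" using nz by (cases n) auto
  have "poly (char_poly (mat_delete M i i)) r = 0" if i: "i < n" for i
  proof -
    define u where "u = (\<lambda>j. w i - w j)"
    have "\<forall>j<n. matvec M n u j = r * u j"
    proof (intro allI impI)
      fix j assume j: "j < n"
      have "matvec M n u j = w i * (\<Sum>k<n. M $$ (j, k)) - matvec M n w j"
        unfolding matvec_def u_def by (simp add: algebra_simps sum_distrib_left sum_subtractf)
      thus "matvec M n u j = r * u j" using rows eigen j by (simp add: u_def algebra_simps)
    qed
    have "\<exists>j<n. w j \<noteq> w i"
    proof (rule ccontr)
      assume "\<not> (\<exists>j<n. w j \<noteq> w i)"
      hence "(\<Sum>k<n. w k) = (\<Sum>k<n. w i)" by (intro sum.cong) auto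
      hence "w i = 0" using sum0 i by simp
      with \<open>\<not> (\<exists>j<n. w j \<noteq> w i)\<close> nz show False by metis
    qed
    then obtain j where j: "j < n" "u j \<noteq> 0" by (auto simp: u_def)
    have "u i = 0" by (simp add: u_def)
    with \<open>\<forall>j<n. matvec M n u j = r * u j\<close> j show ?thesis
      using char_poly_principal_minor_root[of M m i u r j] M i unfolding n by blast
  qed
  hence "poly (pderiv (char_poly M)) r = 0"
    unfolding pderiv_char_poly[OF M] poly_sum by simp
  thus ?thesis unfolding cp pderiv_mult by (simp add: pderiv_pCons)
qed

lemma eq_0_of_linear_quadratic_nonpos:
  fixes a b :: real
  assumes a: "a \<ge> 0" and nonpos: "\<And>t. t > 0 \<Longrightarrow> a * t + b * t\<^sup>2 \<le> 0"
  shows "a = 0"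
proof (rule ccontr)
  assume "a \<noteq> 0"
  with a have a0: "a > 0" by simp
  define t where "t = a / (\<bar>b\<bar> + 1)"
  have t0: "t > 0" using a0 by (simp add: t_def)
  have "\<bar>b\<bar> * t < a" unfolding t_def using a0 by (simp add: field_simps)
  hence "\<bar>b\<bar> * t\<^sup>2 < a * t" using t0 by (simp add: power2_eq_square)
  moreover have "- \<bar>b\<bar> * t\<^sup>2 \<le> b * t\<^sup>2"
    using mult_right_mono[of "- \<bar>b\<bar>" b "t\<^sup>2"] by simp
  ultimately have "a * t + b * t\<^sup>2 > 0" by linarith
  with nonpos[OF t0] show False by simp
qed

(* The box factor makes compactness evident and pins the coordinates outside {..<n} to 0;
   it removes nothing else from the sphere. *)
definition sum_zero_sphere :: "nat \<Rightarrow> (nat \<Rightarrow> real) set" where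
  "sum_zero_sphere n = PiE UNIV (\<lambda>i. if i < n then {-1..1} else {0})
     \<inter> {y. (\<Sum>i<n. y i) = 0 \<and> sqnorm n y = 1}"

lemma compact_sum_zero_sphere: "compact (sum_zero_sphere n)"
proof -
  have "compact (PiE UNIV (\<lambda>i::nat. if i < n then {-1..1::real} else {0}))"
    unfolding compactin_euclidean_iff[symmetric] euclidean_product_topology[symmetric]
    by (subst compactin_PiE) auto
  moreover have "closed {y :: nat \<Rightarrow> real. (\<Sum>i<n. y i) = 0 \<and> sqnorm n y = 1}"
    unfolding sqnorm_def Collect_conj_eq
    by (intro closed_Int closed_Collect_eq continuous_intros continuous_on_product_coordinates)
  ultimately show ?thesis
    unfolding sum_zero_sphere_def by (rule compact_Int_closed)
qed

lemma continuous_on_sqnorm_matvec: "continuous_on S (\<lambda>y. sqnorm n (matvec M n y))"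
  unfolding sqnorm_def matvec_def
  by (intro continuous_intros continuous_on_subset[OF continuous_on_product_coordinates]) simp

lemma sum_zero_sphere_normalize:
  assumes sum0: "(\<Sum>i<n. y i) = 0" and pos: "sqnorm n y > 0"
  defines "z \<equiv> \<lambda>i. if i < n then y i / sqrt (sqnorm n y) else 0"
  shows "z \<in> sum_zero_sphere n"
    and "sqnorm n (matvec M n z) = sqnorm n (matvec M n y) / sqnorm n y"
proof -
  let ?s = "sqrt (sqnorm n y)"
  have s: "?s > 0" and ss: "?s\<^sup>2 = sqnorm n y" using pos by simp_all
  have "(\<Sum>i<n. z i) = (\<Sum>i<n. y i) / ?s" unfolding z_def by (simp add: sum_divide_distrib)
  hence "(\<Sum>i<n. z i) = 0" using sum0 by simp
  moreover have "sqnorm n z = sqnorm n y / ?s\<^sup>2"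
    unfolding z_def sqnorm_def by (simp add: sum_divide_distrib power_divide)
  hence "sqnorm n z = 1" using ss pos by simp
  moreover have "z i \<in> {-1..1}" if i: "i < n" for i
  proof -
    have "(y i)\<^sup>2 \<le> sqnorm n y" unfolding sqnorm_def
      by (rule member_le_sum[where f = "\<lambda>i. (y i)\<^sup>2"]) (use i in auto)
    hence "(z i)\<^sup>2 \<le> 1" using i s ss by (simp add: z_def power_divide)
    thus ?thesis using abs_le_square_iff[of "z i" 1] by (simp add: abs_le_iff)
  qed
  ultimately show "z \<in> sum_zero_sphere n"
    unfolding sum_zero_sphere_def PiE_UNIV_domain Pi_iff by (auto simp: z_def)
  have "matvec M n z i = matvec M n y i / ?s" for i
    unfolding matvec_def z_def by (simp add: sum_divide_distrib)
  hence "sqnorm n (matvec M n z) = sqnorm n (matvec M n y) / ?s\<^sup>2"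
    unfolding sqnorm_def by (simp add: sum_divide_distrib power_divide)
  thus "sqnorm n (matvec M n z) = sqnorm n (matvec M n y) / sqnorm n y" using ss by simp
qed

lemma sum_zero_rayleigh_maximizer:
  assumes "sum_zero_sphere n \<noteq> {}"
  obtains y where "(\<Sum>i<n. y i) = 0" "sqnorm n y = 1"
    "\<And>u. (\<Sum>i<n. u i) = 0 \<Longrightarrow> sqnorm n (matvec M n u) \<le> sqnorm n (matvec M n y) * sqnorm n u"
proof -
  obtain y where y: "y \<in> sum_zero_sphere n"
    and max: "\<forall>z\<in>sum_zero_sphere n. sqnorm n (matvec M n z) \<le> sqnorm n (matvec M n y)"
    using continuous_attains_sup[OF compact_sum_zero_sphere assms continuous_on_sqnorm_matvec]
    by blast
  have "sqnorm n (matvec M n u) \<le> sqnorm n (matvec M n y) * sqnorm n u"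
    if u: "(\<Sum>i<n. u i) = 0" for u
  proof (cases "sqnorm n u = 0")
    case True
    thus ?thesis using sqnorm_matvec_eq_0 by simp
  next
    case False
    hence pos: "sqnorm n u > 0" using sqnorm_nonneg[of n u] by simp
    have "sqnorm n (matvec M n u) / sqnorm n u \<le> sqnorm n (matvec M n y)"
      using max sum_zero_sphere_normalize[OF u pos] by metis
    thus ?thesis using pos by (simp add: field_simps)
  qed
  with y show thesis using that unfolding sum_zero_sphere_def by blast
qed

(* First variation: perturbing the maximizer y in the sum-zero direction z = M^2 y - c y
   changes the Rayleigh quotient at first order by a positive multiple of |z|^2, which
   therefore vanishes. *)
lemma rayleigh_maximizer_square_eigenfun:
  assumes sym: "\<forall>i<n. \<forall>j<n. M $$ (i, j) = M $$ (j, i)"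
    and rows: "\<forall>i<n. (\<Sum>j<n. M $$ (i, j)) = r"
    and sum0: "(\<Sum>i<n. y i) = 0" and unit: "sqnorm n y = 1"
    and max: "\<And>u. (\<Sum>i<n. u i) = 0 \<Longrightarrow>
      sqnorm n (matvec M n u) \<le> sqnorm n (matvec M n y) * sqnorm n u"
  shows "\<forall>i<n. matvec M n (matvec M n y) i = sqnorm n (matvec M n y) * y i"
proof -
  define c where "c = sqnorm n (matvec M n y)"
  define y2 where "y2 = matvec M n (matvec M n y)"
  define z where "z = (\<lambda>i. y2 i - c * y i)"
  have z_sum0: "(\<Sum>i<n. z i) = 0"
    using sum0 unfolding z_def y2_def
    by (simp add: sum_matvec[OF sym rows] sum_subtractf sum_distrib_left[symmetric])
  have y2_z: "(\<Sum>i<n. matvec M n y i * matvec M n z i) = (\<Sum>i<n. y2 i * z i)"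
    unfolding y2_def by (rule matvec_symmetric[OF sym, symmetric])
  have "2 * sqnorm n z * t + (sqnorm n (matvec M n z) - c * sqnorm n z) * t\<^sup>2 \<le> 0" for t
  proof -
    define u where "u = (\<lambda>i. 1 * y i + t * z i)"
    have "(\<Sum>i<n. u i) = 0" unfolding u_def using sum0 z_sum0
      by (simp add: sum.distrib sum_distrib_left[symmetric])
    hence "sqnorm n (matvec M n u) \<le> c * sqnorm n u" unfolding c_def by (rule max)
    moreover have "matvec M n u i = matvec M n y i + t * matvec M n z i" for i
      unfolding u_def matvec_linear by simp
    hence "sqnorm n (matvec M n u) = c + 2 * t * (\<Sum>i<n. y2 i * z i) + t\<^sup>2 * sqnorm n (matvec M n z)"
      unfolding sqnorm_def c_def y2_z[symmetric]
      by (simp add: power2_sum sum.distrib sum_distrib_left algebra_simps power_mult_distrib)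
    moreover have "sqnorm n u = 1 + 2 * t * (\<Sum>i<n. y i * z i) + t\<^sup>2 * sqnorm n z"
      using unit unfolding sqnorm_def u_def
      by (simp add: power2_sum sum.distrib sum_distrib_left algebra_simps power_mult_distrib)
    moreover have "(\<Sum>i<n. y2 i * z i) - c * (\<Sum>i<n. y i * z i) = sqnorm n z"
      unfolding sqnorm_def z_def
      by (simp add: sum_distrib_left sum_subtractf[symmetric] power2_eq_square algebra_simps)
    ultimately show ?thesis by (simp add: algebra_simps)
  qed
  hence "2 * sqnorm n z = 0"
    by (intro eq_0_of_linear_quadratic_nonpos[of _ "sqnorm n (matvec M n z) - c * sqnorm n z"])
       (simp_all add: sqnorm_nonneg)
  hence "\<forall>i<n. z i = 0" using sqnorm_eq_0_iff by simp
  thus ?thesis unfolding z_def y2_def c_def by simp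
qed

(* Either M y + t y is a t-eigenfunction or it vanishes and y is a (-t)-eigenfunction. *)
lemma sum_zero_eigenfun_of_square:
  assumes sym: "\<forall>i<n. \<forall>j<n. M $$ (i, j) = M $$ (j, i)"
    and rows: "\<forall>i<n. (\<Sum>j<n. M $$ (i, j)) = r"
    and sq: "\<forall>i<n. matvec M n (matvec M n y) i = t\<^sup>2 * y i" and t: "t \<ge> 0"
    and sum0: "(\<Sum>i<n. y i) = 0" and nz: "j < n" "y j \<noteq> 0"
  obtains lam v k where "\<bar>lam\<bar> = t" "\<forall>i<n. matvec M n v i = lam * v i"
    "(\<Sum>i<n. v i) = 0" "k < n" "v k \<noteq> 0"
proof (cases "\<exists>k<n. matvec M n y k + t * y k \<noteq> 0")
  case True
  then obtain k where k: "k < n" "matvec M n y k + t * y k \<noteq> 0" by blast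
  define v where "v = (\<lambda>i. 1 * matvec M n y i + t * y i)"
  have "\<forall>i<n. matvec M n v i = t * v i"
    using sq unfolding v_def matvec_linear by (simp add: algebra_simps power2_eq_square)
  moreover have "(\<Sum>i<n. v i) = 0" unfolding v_def
    using sum0 by (simp add: sum.distrib sum_matvec[OF sym rows] sum_distrib_left[symmetric])
  ultimately show thesis using that[of t v k] k t unfolding v_def by simp
next
  case False
  hence "\<forall>i<n. matvec M n y i = (- t) * y i" by (simp add: add_eq_0_iff2)
  thus thesis using that[of "- t" y j] nz sum0 t by simp
qed

lemma sqnorm_matvec_le_of_char_poly_roots:
  assumes M: "M \<in> carrier_mat n n"
    and sym: "\<forall>i<n. \<forall>j<n. M $$ (i, j) = M $$ (j, i)"
    and rows: "\<forall>i<n. (\<Sum>j<n. M $$ (i, j)) = r"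
    and cp: "char_poly M = [:-r, 1:] * p"
    and roots: "\<forall>t. poly p t = 0 \<longrightarrow> \<bar>t\<bar> \<le> s" and sr: "s < r"
    and sum0: "(\<Sum>i<n. y i) = 0"
  shows "sqnorm n (matvec M n y) \<le> s\<^sup>2 * sqnorm n y"
proof (cases "sum_zero_sphere n = {}")
  case True
  have "sqnorm n y = 0"
  proof (rule ccontr)
    assume "sqnorm n y \<noteq> 0"
    hence "sqnorm n y > 0" using sqnorm_nonneg[of n y] by simp
    with sum_zero_sphere_normalize(1)[OF sum0] True show False by blast
  qed
  thus ?thesis using sqnorm_matvec_eq_0 by simp
next
  case False
  obtain y0 where y0: "(\<Sum>i<n. y0 i) = 0" "sqnorm n y0 = 1"
    and max: "\<And>u. (\<Sum>i<n. u i) = 0 \<Longrightarrow>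
      sqnorm n (matvec M n u) \<le> sqnorm n (matvec M n y0) * sqnorm n u"
    using sum_zero_rayleigh_maximizer[OF False, of M] by blast
  define c where "c = sqnorm n (matvec M n y0)"
  have c0: "c \<ge> 0" unfolding c_def by (rule sqnorm_nonneg)
  hence c: "c = (sqrt c)\<^sup>2" by simp
  obtain j where j: "j < n" "y0 j \<noteq> 0" using y0(2) sqnorm_eq_0_iff[of n y0] by auto
  have sq: "\<forall>i<n. matvec M n (matvec M n y0) i = (sqrt c)\<^sup>2 * y0 i"
    using rayleigh_maximizer_square_eigenfun[OF sym rows y0 max] c unfolding c_def by simp
  obtain lam v k where lam: "\<bar>lam\<bar> = sqrt c" and eigen: "\<forall>i<n. matvec M n v i = lam * v i"
    and v: "(\<Sum>i<n. v i) = 0" "k < n" "v k \<noteq> 0"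
    by (rule sum_zero_eigenfun_of_square[OF sym rows sq real_sqrt_ge_zero[OF c0] y0(1) j])
  have "lam \<noteq> r"
  proof
    assume "lam = r"
    hence "poly p r = 0"
      using char_poly_double_root_of_sum_zero_eigenfun[OF M rows cp _ v] eigen by simp
    thus False using roots sr by force
  qed
  moreover have "poly (char_poly M) lam = 0" by (rule char_poly_root_of_eigenfun[OF M eigen v(2,3)])
  ultimately have "\<bar>lam\<bar> \<le> s" using roots unfolding cp by simp
  hence "c \<le> s\<^sup>2" using lam c by (metis abs_ge_zero power_mono)
  thus ?thesis using max[OF sum0] sqnorm_nonneg[of n y] unfolding c_def
    by (meson mult_right_mono order_trans)
qed

definition nbr_pairs :: "(nat \<Rightarrow> nat \<Rightarrow> bool) \<Rightarrow> nat set \<Rightarrow> nat \<Rightarrow> nat set set" where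
  "nbr_pairs H X w = {S. S \<subseteq> {x\<in>X. H w x} \<and> card S = 2}"

lemma common_nbr_graph_edges_eq_UN_nbr_pairs:
  assumes irrefl: "\<And>x. \<not> H x x" and X: "X \<subseteq> {..<n}"
  shows "{{x, y} | x y. x \<in> X \<and> y \<in> X \<and> x \<noteq> y \<and> common_nbr_graph n H x y}
    = (\<Union>w<n. nbr_pairs H X w)" (is "?E = _")
proof (intro equalityI subsetI)
  fix S assume "S \<in> ?E"
  then obtain x y w where "S = {x, y}" "x \<in> X" "y \<in> X" "x \<noteq> y" "w < n" "H w x" "H w y"
    unfolding common_nbr_graph_def by blast
  thus "S \<in> (\<Union>w<n. nbr_pairs H X w)" unfolding nbr_pairs_def by auto
next
  fix S assume "S \<in> (\<Union>w<n. nbr_pairs H X w)"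
  then obtain w where w: "w < n" "S \<subseteq> {x\<in>X. H w x}" "card S = 2"
    unfolding nbr_pairs_def by blast
  then obtain x y where S: "S = {x, y}" "x \<noteq> y" by (auto simp: card_2_iff)
  with w irrefl X have "common_nbr_graph n H x y" unfolding common_nbr_graph_def by blast
  with w S show "S \<in> ?E" by blast
qed

lemma nbr_pairs_disjoint:
  assumes sym: "\<And>x y. H x y \<Longrightarrow> H y x" and irrefl: "\<And>x. \<not> H x x"
    and noC4: "\<not> has_C4 n H" and X: "X \<subseteq> {..<n}"
    and w: "w < n" "w' < n" "w \<noteq> w'"
  shows "nbr_pairs H X w \<inter> nbr_pairs H X w' = {}"
proof (rule ccontr)
  assume "nbr_pairs H X w \<inter> nbr_pairs H X w' \<noteq> {}"
  then obtain x y where xy: "x \<noteq> y" "x \<in> X" "y \<in> X" "H w x" "H w y" "H w' x" "H w' y"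
    unfolding nbr_pairs_def by (auto simp: card_2_iff)
  hence "distinct [w, x, w', y]" using irrefl w by auto
  moreover have "H w x \<and> H x w' \<and> H w' y \<and> H y w" using xy sym by blast
  ultimately have "has_C4 n H" unfolding has_C4_def using w X xy by blast
  with noC4 show False ..
qed

lemma edges_in_common_nbr_graph:
  assumes sym: "\<And>x y. H x y \<Longrightarrow> H y x" and irrefl: "\<And>x. \<not> H x x"
    and noC4: "\<not> has_C4 n H" and X: "X \<subseteq> {..<n}"
  shows "edges_in (common_nbr_graph n H) X = (\<Sum>w<n. card {x\<in>X. H w x} choose 2)"
proof -
  have fin: "finite X" using X finite_subset by blast
  have "edges_in (common_nbr_graph n H) X = card (\<Union>w<n. nbr_pairs H X w)"
    unfolding edges_in_def common_nbr_graph_edges_eq_UN_nbr_pairs[OF irrefl X] ..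
  also have "\<dots> = (\<Sum>w<n. card (nbr_pairs H X w))"
  proof (rule card_UN_disjoint)
    show "\<forall>w\<in>{..<n}. finite (nbr_pairs H X w)"
      using fin unfolding nbr_pairs_def by (auto intro: finite_subset[of _ "Pow X"])
  qed (use nbr_pairs_disjoint[OF sym irrefl noC4 X] in auto)
  also have "\<dots> = (\<Sum>w<n. card {x\<in>X. H w x} choose 2)"
    unfolding nbr_pairs_def by (intro sum.cong refl n_subsets) (use fin in auto)
  finally show ?thesis .
qed

lemma two_mult_choose_two: "2 * real (m choose 2) = real m * (real m - 1)"
proof (induction m)
  case (Suc m)
  have "Suc m choose 2 = m + (m choose 2)"
    by (metis Suc_1 binomial_Suc_Suc choose_one)
  thus ?case using Suc by (simp add: algebra_simps)
qed simp

lemma card_loopless_nbrs: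
  assumes zero_one: "\<forall>i<n. \<forall>j<n. M $$ (i, j) = 0 \<or> M $$ (i, j) = 1"
    and M: "M \<in> carrier_mat n n" and X: "X \<subseteq> {..<n}" and w: "w < n"
  shows "real (card {x\<in>X. loopless_graph M w x})
    = matvec M n (indicator X) w - indicator X w * M $$ (w, w)"
proof -
  have fin: "finite X" using X finite_subset by blast
  have "M $$ (w, x) = (if loopless_graph M w x then 1 else 0) + (if x = w then M $$ (w, w) else 0)"
    if "x \<in> X" for x
    using zero_one w X that M unfolding loopless_graph_def by auto
  hence "(\<Sum>x\<in>X. M $$ (w, x))
      = (\<Sum>x\<in>X. if loopless_graph M w x then 1 else 0) + (\<Sum>x\<in>X. if x = w then M $$ (w, w) else 0)"
    by (simp add: sum.distrib)
  also have "\<dots> = real (card {x\<in>X. loopless_graph M w x}) + indicator X w * M $$ (w, w)"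
    using fin by (simp add: sum.inter_filter[symmetric] indicator_def)
  finally show ?thesis
    using X unfolding matvec_def by (simp add: Int_absorb1)
qed

lemma sum_indicator_lessThan:
  fixes X :: "nat set"
  assumes "X \<subseteq> {..<n}"
  shows "(\<Sum>j<n. indicator X j) = real (card X)"
proof -
  have "(\<Sum>j<n. indicator X j :: real) = real (\<Sum>j<n. indicator X j :: nat)"
    by (simp add: real_of_nat_indicator)
  also have "(\<Sum>j<n. indicator X j :: nat) = card ({..<n} \<inter> X)"
    by (rule sum_indicator_eq_card) simp
  also have "{..<n} \<inter> X = X" using assms by blast
  finally show ?thesis .
qed

(* The H-degree of w into X is d w - l w, where d w also counts a loop at w and l w in {0, 1}
   records it; hence 2 e(X) is the sum of (d - l)(d - l - 1), which expands as below. *)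
lemma twice_edges_in_common_nbr_graph_eq:
  assumes M: "M \<in> carrier_mat n n"
    and zero_one: "\<forall>i<n. \<forall>j<n. M $$ (i, j) = 0 \<or> M $$ (i, j) = 1"
    and sym: "\<forall>i<n. \<forall>j<n. M $$ (i, j) = M $$ (j, i)"
    and rows: "\<forall>i<n. (\<Sum>j<n. M $$ (i, j)) = r"
    and noC4: "\<not> has_C4 n (loopless_graph M)" and X: "X \<subseteq> {..<n}"
  defines "d \<equiv> matvec M n (indicator X)" and "l \<equiv> \<lambda>w. indicator X w * M $$ (w, w)"
  shows "2 * real (edges_in (common_nbr_graph n (loopless_graph M)) X)
    = sqnorm n d - r * card X - 2 * (\<Sum>w<n. d w * l w) + 2 * (\<Sum>w<n. l w)"
proof -
  have H: "\<And>x y. loopless_graph M x y \<Longrightarrow> loopless_graph M y x" "\<And>x. \<not> loopless_graph M x x"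
    using sym M unfolding loopless_graph_def by auto
  have "edges_in (common_nbr_graph n (loopless_graph M)) X
      = (\<Sum>w<n. card {x\<in>X. loopless_graph M w x} choose 2)"
    by (rule edges_in_common_nbr_graph) (use H noC4 X in auto)
  hence "2 * real (edges_in (common_nbr_graph n (loopless_graph M)) X)
      = (\<Sum>w<n. 2 * real (card {x\<in>X. loopless_graph M w x} choose 2))"
    by (simp add: sum_distrib_left)
  also have "\<dots> = (\<Sum>w<n. (d w)\<^sup>2 - d w - 2 * (d w * l w) + 2 * l w)"
  proof (intro sum.cong refl)
    fix w assume "w \<in> {..<n}"
    hence w: "w < n" by simp
    have "2 * real (card {x\<in>X. loopless_graph M w x} choose 2) = (d w - l w) * (d w - l w - 1)"
      unfolding two_mult_choose_two card_loopless_nbrs[OF zero_one M X w] d_def l_def ..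
    also have "\<dots> = (d w)\<^sup>2 - d w - 2 * (d w * l w) + l w * l w + l w"
      by (simp add: algebra_simps power2_eq_square)
    also have "l w * l w = l w"
      using zero_one[rule_format, OF w w] unfolding l_def indicator_def by auto
    finally show "2 * real (card {x\<in>X. loopless_graph M w x} choose 2)
        = (d w)\<^sup>2 - d w - 2 * (d w * l w) + 2 * l w" by simp
  qed
  also have "\<dots> = sqnorm n d - r * card X - 2 * (\<Sum>w<n. d w * l w) + 2 * (\<Sum>w<n. l w)"
    unfolding sqnorm_def d_def
    by (simp add: sum.distrib sum_subtractf sum_distrib_left sum_matvec[OF sym rows]
        sum_indicator_lessThan[OF X])
  finally show ?thesis .
qed

lemma twice_edges_in_common_nbr_graph_bounds:
  assumes M: "M \<in> carrier_mat n n"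
    and zero_one: "\<forall>i<n. \<forall>j<n. M $$ (i, j) = 0 \<or> M $$ (i, j) = 1"
    and sym: "\<forall>i<n. \<forall>j<n. M $$ (i, j) = M $$ (j, i)"
    and rows: "\<forall>i<n. (\<Sum>j<n. M $$ (i, j)) = r" and r: "r \<ge> 1"
    and noC4: "\<not> has_C4 n (loopless_graph M)" and X: "X \<subseteq> {..<n}"
  defines "e \<equiv> real (edges_in (common_nbr_graph n (loopless_graph M)) X)"
    and "D \<equiv> sqnorm n (matvec M n (indicator X))"
  shows "D - (3 * r - 2) * card X \<le> 2 * e" and "2 * e \<le> D - (r - 2) * card X"
proof -
  define d where "d = matvec M n (indicator X)"
  define l where "l w = indicator X w * M $$ (w, w)" for w
  define S where "S = (\<Sum>w<n. d w * l w)"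
  define L where "L = (\<Sum>w<n. l w)"
  have d: "0 \<le> d w \<and> d w \<le> r" if w: "w < n" for w
  proof -
    have entry: "0 \<le> M $$ (w, j) * indicator X j" "M $$ (w, j) * indicator X j \<le> M $$ (w, j)"
      if "j < n" for j
      using zero_one w that unfolding indicator_def by force+
    have "0 \<le> d w" unfolding d_def matvec_def by (rule sum_nonneg) (use entry in simp)
    moreover have "d w \<le> (\<Sum>j<n. M $$ (w, j))"
      unfolding d_def matvec_def by (rule sum_mono) (use entry in simp)
    ultimately show ?thesis using rows w by simp
  qed
  have l: "l w = 0 \<or> l w = 1" "l w \<le> indicator X w" if "w < n" for w
    using zero_one[rule_format, OF that that] unfolding l_def indicator_def by auto
  have "0 \<le> L" unfolding L_def by (rule sum_nonneg) (use l in force)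
  moreover have "L \<le> card X"
    unfolding L_def sum_indicator_lessThan[OF X, symmetric] by (rule sum_mono) (use l in simp)
  ultimately have L: "0 \<le> L" "L \<le> card X" by blast+
  have dl: "0 \<le> d w * l w" "d w * l w \<le> r * l w" if "w < n" for w
    using d[OF that] l[OF that] by auto
  have "0 \<le> S" unfolding S_def by (rule sum_nonneg) (use dl in simp)
  moreover have "S \<le> r * L"
    unfolding S_def L_def sum_distrib_left by (rule sum_mono) (use dl in simp)
  ultimately have S: "0 \<le> S" "S \<le> r * L" by blast+
  have e: "2 * e = D - r * card X - 2 * S + 2 * L"
    using twice_edges_in_common_nbr_graph_eq[OF M zero_one sym rows noC4 X]
    unfolding e_def D_def S_def L_def d_def l_def .
  show "D - (3 * r - 2) * card X \<le> 2 * e"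
    using e S L r mult_right_mono[of L "card X" "r - 1"] by (simp add: algebra_simps)
  show "2 * e \<le> D - (r - 2) * card X"
    using e S L by (simp add: algebra_simps)
qed

(* Split the indicator of X into its mean |X|/n, on which M acts as r, and a sum-zero part y
   with |y|^2 = |X| - |X|^2 / n. *)
lemma sqnorm_matvec_indicator_bounds:
  assumes sym: "\<forall>i<n. \<forall>j<n. M $$ (i, j) = M $$ (j, i)"
    and rows: "\<forall>i<n. (\<Sum>j<n. M $$ (i, j)) = r"
    and spectral: "\<forall>y. (\<Sum>i<n. y i) = 0 \<longrightarrow> sqnorm n (matvec M n y) \<le> c * sqnorm n y"
    and c: "c \<ge> 0" and X: "X \<subseteq> {..<n}" and n: "n > 0"
  shows "r\<^sup>2 * (real (card X))\<^sup>2 / n \<le> sqnorm n (matvec M n (indicator X))"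
    and "sqnorm n (matvec M n (indicator X)) \<le> r\<^sup>2 * (real (card X))\<^sup>2 / n + c * card X"
proof -
  define k where "k = real (card X)"
  define y where "y j = indicator X j - k / n" for j
  have sum_ind: "(\<Sum>j<n. indicator X j) = k"
    unfolding k_def by (rule sum_indicator_lessThan[OF X])
  have sum0: "(\<Sum>j<n. y j) = 0" unfolding y_def using sum_ind n by (simp add: sum_subtractf)
  define m where "m = r * k / n"
  have "matvec M n (indicator X) i = m + matvec M n y i" if "i < n" for i
  proof -
    have "matvec M n (indicator X) i = matvec M n (\<lambda>j. (k / n) * 1 + 1 * y j) i"
      by (rule matvec_cong) (simp add: y_def)
    thus ?thesis unfolding matvec_linear m_def using matvec_const[OF rows that] by simp
  qed
  hence "sqnorm n (matvec M n (indicator X))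
      = (\<Sum>i<n. m\<^sup>2 + 2 * m * matvec M n y i + (matvec M n y i)\<^sup>2)"
    unfolding sqnorm_def by (intro sum.cong refl) (simp add: power2_sum)
  also have "\<dots> = n * m\<^sup>2 + 2 * m * (\<Sum>i<n. matvec M n y i) + sqnorm n (matvec M n y)"
    unfolding sqnorm_def by (simp add: sum.distrib sum_distrib_left)
  also have "\<dots> = r\<^sup>2 * k\<^sup>2 / n + sqnorm n (matvec M n y)"
    using n sum0 unfolding m_def sum_matvec[OF sym rows] by (simp add: power2_eq_square)
  finally have sq: "sqnorm n (matvec M n (indicator X)) = r\<^sup>2 * k\<^sup>2 / n + sqnorm n (matvec M n y)" .
  have "sqnorm n y = (\<Sum>j<n. indicator X j - 2 * (k / n) * indicator X j + (k / n)\<^sup>2)"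
    unfolding sqnorm_def y_def
    by (intro sum.cong refl) (simp add: indicator_def power2_eq_square algebra_simps)
  also have "\<dots> = k - 2 * (k / n) * k + n * (k / n)\<^sup>2"
    by (simp only: sum.distrib sum_subtractf sum_distrib_left[symmetric] sum_ind sum_constant
        card_lessThan)
  also have "\<dots> = k - k\<^sup>2 / n"
    using n by (simp add: power2_eq_square field_simps)
  finally have "sqnorm n y \<le> k" using n by simp
  hence "sqnorm n (matvec M n y) \<le> c * k"
    using spectral sum0 c by (meson mult_left_mono order_trans)
  thus "sqnorm n (matvec M n (indicator X)) \<le> r\<^sup>2 * (real (card X))\<^sup>2 / n + c * card X"
    using sq unfolding k_def by simp
  show "r\<^sup>2 * (real (card X))\<^sup>2 / n \<le> sqnorm n (matvec M n (indicator X))"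
    using sq sqnorm_nonneg unfolding k_def by simp
qed

lemma jumbled_deviation_arith:
  fixes q r k e D n :: real
  assumes q: "q \<ge> 1" and r: "r = q + 1" and n: "n = (q\<^sup>2 + 1) * r"
    and k: "0 \<le> k" "k \<le> n"
    and D: "r\<^sup>2 * k\<^sup>2 / n \<le> D" "D \<le> r\<^sup>2 * k\<^sup>2 / n + 2 * q * k"
    and e: "D - (3 * r - 2) * k \<le> 2 * e" "2 * e \<le> D - (r - 2) * k"
  shows "\<bar>e - q / (q\<^sup>2 + 1) * (k * (k - 1) / 2)\<bar> \<le> (2 * q + 1) * k"
proof -
  define Q where "Q = q\<^sup>2 + 1"
  define a where "a = k\<^sup>2 / Q"
  define b where "b = q * k / Q"
  have "q \<le> q\<^sup>2" using mult_right_mono[OF q, of q] q by (simp add: power2_eq_square)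
  hence Q: "Q > 0" "q \<le> Q" unfolding Q_def using q by simp_all
  have "r\<^sup>2 * k\<^sup>2 / n = r * a"
    using q Q(1) unfolding r n Q_def[symmetric] a_def by (simp add: power2_eq_square)
  hence Da: "r\<^sup>2 * k\<^sup>2 / n = q * a + a" unfolding r by (simp add: algebra_simps)
  have dev: "q / Q * (k * (k - 1) / 2) = (q * a - b) / 2"
    using Q(1) unfolding a_def b_def by (simp add: field_simps power2_eq_square)
  have a: "0 \<le> a" "a \<le> q * k + k"
    using k Q mult_right_mono[OF k(2) k(1)]
    unfolding a_def n r Q_def[symmetric] by (simp_all add: field_simps power2_eq_square)
  have b: "0 \<le> b" "b \<le> k"
    using k Q q mult_right_mono[OF Q(2) k(1)] unfolding b_def by (simp_all add: field_simps)
  have "k \<le> q * k" using mult_right_mono[OF q k(1)] by simp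
  moreover have "q * a + a \<le> D" "D \<le> q * a + a + 2 * (q * k)" using D unfolding Da by simp_all
  moreover have "D - 3 * (q * k) - k \<le> 2 * e" "2 * e \<le> D - q * k + k"
    using e unfolding r by (simp_all add: algebra_simps)
  moreover have rhs: "(2 * q + 1) * k = 2 * (q * k) + k" by (simp add: algebra_simps)
  ultimately show ?thesis using a b k(1) unfolding Q_def[symmetric] dev abs_le_iff rhs
    by (intro conjI) argo+
qed

theorem mainTheorem3:
  fixes q n :: nat and M :: "real mat"
  assumes q2: "q \<ge> 2"
    and n_def: "n = (q^2 + 1) * (q + 1)"
    and dimM: "M \<in> carrier_mat n n"
    and zero_one: "\<forall>i<n. \<forall>j<n. M $$ (i, j) = 0 \<or> M $$ (i, j) = 1"
    and symM: "\<forall>i<n. \<forall>j<n. M $$ (i, j) = M $$ (j, i)"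
    and rows: "\<forall>i<n. (\<Sum>j<n. M $$ (i, j)) = real (q + 1)"
    and spec: "\<exists>p. char_poly M = [:- real (q + 1), 1:] * p \<and>
                 (\<forall>t::real. poly p t = 0 \<longrightarrow> \<bar>t\<bar> \<le> sqrt (2 * real q))"
    and noC3: "\<not> has_triangle n (loopless_graph M)"
    and noC4: "\<not> has_C4 n (loopless_graph M)"
  shows "\<forall>X \<subseteq> {0..<n}.
     \<bar>real (edges_in (common_nbr_graph n (loopless_graph M)) X)
        - real q / real (q^2 + 1) * real (card X choose 2)\<bar>
       \<le> real (2 * q + 1) * real (card X)"
proof (intro allI impI)
  fix X assume "X \<subseteq> {0..<n}"
  hence X: "X \<subseteq> {..<n}" by auto
  obtain p where cp: "char_poly M = [:- real (q + 1), 1:] * p"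
    and roots: "\<forall>t. poly p t = 0 \<longrightarrow> \<bar>t\<bar> \<le> sqrt (2 * real q)" using spec by blast
  have "sqrt (2 * real q) < sqrt ((real (q + 1))\<^sup>2)"
    by (rule real_sqrt_less_mono) (simp add: power2_sum add_pos_nonneg)
  hence spectral: "\<forall>y. (\<Sum>i<n. y i) = 0 \<longrightarrow> sqnorm n (matvec M n y) \<le> 2 * real q * sqnorm n y"
    using sqnorm_matvec_le_of_char_poly_roots[OF dimM symM rows cp roots] by simp
  have "0 \<le> 2 * real q" "n > 0" "1 \<le> real (q + 1)" unfolding n_def by simp_all
  note degrees = sqnorm_matvec_indicator_bounds[OF symM rows spectral this(1) X this(2)]
    and edges = twice_edges_in_common_nbr_graph_bounds[OF dimM zero_one symM rows this(3) noC4 X]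
  have choose: "real (card X choose 2) = real (card X) * (real (card X) - 1) / 2"
    using two_mult_choose_two[of "card X"] by simp
  have n_real: "real n = ((real q)\<^sup>2 + 1) * real (q + 1)" unfolding n_def by (simp add: algebra_simps)
  have card_le: "real (card X) \<le> real n" using card_mono[OF _ X] by simp
  have "\<bar>real (edges_in (common_nbr_graph n (loopless_graph M)) X)
      - real q / ((real q)\<^sup>2 + 1) * (card X * (real (card X) - 1) / 2)\<bar> \<le> (2 * real q + 1) * card X"
    by (rule jumbled_deviation_arith[OF _ _ n_real _ card_le degrees edges]) (use q2 in simp_all)
  thus "\<bar>real (edges_in (common_nbr_graph n (loopless_graph M)) X)
        - real q / real (q^2 + 1) * real (card X choose 2)\<bar> \<le> real (2 * q + 1) * real (card X)"
    unfolding choose by (simp add: ac_simps)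
qed

end
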